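(* Let $k$ be a field. Every nondegenerate variety of representations of Lie algebras over $k$ is an IBN-variety.
   Context: A representation of a Lie algebra over $k$ is a two-sorted algebra ($\Gamma=\{1,2\}$): sort 1 is a Lie algebra $L$ over $k$ (operations $+,0,-$, a unary scalar multiplication by each $\lambda\in k$, and the bracket), sort 2 is a $k$-vector space $V$ (operations $+,0,-$ and a unary scalar multiplication by each $\lambda\in k$), and there is an action $\circ$ of type $(1,2;2)$ which is bilinear and satisfies $[a,b]\circ v=a\circ(b\circ v)-b\circ(a\circ v)$. A variety of representations of Lie algebras is a class of such representations defined by (two-sorted) identities. A two-sorted variety is nondegenerate if neither $x^{(1)}_1=x^{(1)}_2$ nor $x^{(2)}_1=x^{(2)}_2$ is an identity of it. It is an IBN-variety if for any free algebras $F(Y),F(Z)$ of the variety with finite free generating sets $Y=Y^{(1)}\uplus Y^{(2)}$, $Z=Z^{(1)}\uplus Z^{(2)}$ (split by sort), $F(Y)\cong F(Z)$ implies $|Y^{(1)}|=|Z^{(1)}|$ and $|Y^{(2)}|=|Z^{(2)}|$. *)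

theory Defs
  imports Main
begin

text \<open>Sort 1 (Lie algebra) terms: variables x^(1)_i, 0, +, -, scalar multiplication by each
  scalar, and the bracket.\<close>
datatype 'k tm1 =
    V1 nat
  | Zero1
  | Add1 "'k tm1" "'k tm1"
  | Neg1 "'k tm1"
  | Smul1 'k "'k tm1"
  | Br "'k tm1" "'k tm1"

text \<open>Sort 2 (vector space) terms: variables x^(2)_i, 0, +, -, scalar multiplication,
  and the action of type (1,2;2).\<close>
datatype 'k tm2 =
    V2 nat
  | Zero2
  | Add2 "'k tm2" "'k tm2"
  | Neg2 "'k tm2"
  | Smul2 'k "'k tm2"
  | Act "'k tm1" "'k tm2"

primrec vars1 :: "'k tm1 \<Rightarrow> nat set" where
  "vars1 (V1 i) = {i}"
| "vars1 Zero1 = {}"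
| "vars1 (Add1 a b) = vars1 a \<union> vars1 b"
| "vars1 (Neg1 a) = vars1 a"
| "vars1 (Smul1 c a) = vars1 a"
| "vars1 (Br a b) = vars1 a \<union> vars1 b"

primrec vars21 :: "'k tm2 \<Rightarrow> nat set" where
  "vars21 (V2 i) = {}"
| "vars21 Zero2 = {}"
| "vars21 (Add2 u v) = vars21 u \<union> vars21 v"
| "vars21 (Neg2 u) = vars21 u"
| "vars21 (Smul2 c u) = vars21 u"
| "vars21 (Act a u) = vars1 a \<union> vars21 u"

primrec vars22 :: "'k tm2 \<Rightarrow> nat set" where
  "vars22 (V2 i) = {i}"
| "vars22 Zero2 = {}"
| "vars22 (Add2 u v) = vars22 u \<union> vars22 v"
| "vars22 (Neg2 u) = vars22 u"
| "vars22 (Smul2 c u) = vars22 u"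
| "vars22 (Act a u) = vars22 u"

primrec sub1 :: "(nat \<Rightarrow> 'k tm1) \<Rightarrow> 'k tm1 \<Rightarrow> 'k tm1" where
  "sub1 \<sigma> (V1 i) = \<sigma> i"
| "sub1 \<sigma> Zero1 = Zero1"
| "sub1 \<sigma> (Add1 a b) = Add1 (sub1 \<sigma> a) (sub1 \<sigma> b)"
| "sub1 \<sigma> (Neg1 a) = Neg1 (sub1 \<sigma> a)"
| "sub1 \<sigma> (Smul1 c a) = Smul1 c (sub1 \<sigma> a)"
| "sub1 \<sigma> (Br a b) = Br (sub1 \<sigma> a) (sub1 \<sigma> b)"

primrec sub2 :: "(nat \<Rightarrow> 'k tm1) \<Rightarrow> (nat \<Rightarrow> 'k tm2) \<Rightarrow> 'k tm2 \<Rightarrow> 'k tm2" where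
  "sub2 \<sigma> \<tau> (V2 i) = \<tau> i"
| "sub2 \<sigma> \<tau> Zero2 = Zero2"
| "sub2 \<sigma> \<tau> (Add2 u v) = Add2 (sub2 \<sigma> \<tau> u) (sub2 \<sigma> \<tau> v)"
| "sub2 \<sigma> \<tau> (Neg2 u) = Neg2 (sub2 \<sigma> \<tau> u)"
| "sub2 \<sigma> \<tau> (Smul2 c u) = Smul2 c (sub2 \<sigma> \<tau> u)"
| "sub2 \<sigma> \<tau> (Act a u) = Act (sub1 \<sigma> a) (sub2 \<sigma> \<tau> u)"

text \<open>A variety of representations is given by a set of defining identities
  E1 (between sort-1 terms) and E2 (between sort-2 terms).
  The identities of the variety are the equational consequences of the axioms of
  representations of Lie algebras together with E1, E2, i.e. the least fully invariant
  congruence on the two-sorted term algebra containing them (Birkhoff; both sorts have a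
  constant, so carriers are nonempty and two-sorted equational logic is complete).\<close>
inductive ident1 :: "('k::field tm1 \<times> 'k tm1) set \<Rightarrow> ('k tm2 \<times> 'k tm2) set \<Rightarrow> 'k tm1 \<Rightarrow> 'k tm1 \<Rightarrow> bool"
  and ident2 :: "('k::field tm1 \<times> 'k tm1) set \<Rightarrow> ('k tm2 \<times> 'k tm2) set \<Rightarrow> 'k tm2 \<Rightarrow> 'k tm2 \<Rightarrow> bool"
  for E1 E2
where
  hyp1: "(s, t) \<in> E1 \<Longrightarrow> ident1 E1 E2 (sub1 \<sigma> s) (sub1 \<sigma> t)"
| hyp2: "(s, t) \<in> E2 \<Longrightarrow> ident2 E1 E2 (sub2 \<sigma> \<tau> s) (sub2 \<sigma> \<tau> t)"
| refl1: "ident1 E1 E2 a a"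
| sym1: "ident1 E1 E2 a b \<Longrightarrow> ident1 E1 E2 b a"
| trans1: "ident1 E1 E2 a b \<Longrightarrow> ident1 E1 E2 b c \<Longrightarrow> ident1 E1 E2 a c"
| refl2: "ident2 E1 E2 u u"
| sym2: "ident2 E1 E2 u v \<Longrightarrow> ident2 E1 E2 v u"
| trans2: "ident2 E1 E2 u v \<Longrightarrow> ident2 E1 E2 v w \<Longrightarrow> ident2 E1 E2 u w"
| cAdd1: "ident1 E1 E2 a a' \<Longrightarrow> ident1 E1 E2 b b' \<Longrightarrow> ident1 E1 E2 (Add1 a b) (Add1 a' b')"
| cNeg1: "ident1 E1 E2 a a' \<Longrightarrow> ident1 E1 E2 (Neg1 a) (Neg1 a')"
| cSmul1: "ident1 E1 E2 a a' \<Longrightarrow> ident1 E1 E2 (Smul1 c a) (Smul1 c a')"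
| cBr: "ident1 E1 E2 a a' \<Longrightarrow> ident1 E1 E2 b b' \<Longrightarrow> ident1 E1 E2 (Br a b) (Br a' b')"
| cAdd2: "ident2 E1 E2 u u' \<Longrightarrow> ident2 E1 E2 v v' \<Longrightarrow> ident2 E1 E2 (Add2 u v) (Add2 u' v')"
| cNeg2: "ident2 E1 E2 u u' \<Longrightarrow> ident2 E1 E2 (Neg2 u) (Neg2 u')"
| cSmul2: "ident2 E1 E2 u u' \<Longrightarrow> ident2 E1 E2 (Smul2 c u) (Smul2 c u')"
| cAct: "ident1 E1 E2 a a' \<Longrightarrow> ident2 E1 E2 u u' \<Longrightarrow> ident2 E1 E2 (Act a u) (Act a' u')"
| as1: "ident1 E1 E2 (Add1 (Add1 a b) c) (Add1 a (Add1 b c))"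
| co1: "ident1 E1 E2 (Add1 a b) (Add1 b a)"
| ze1: "ident1 E1 E2 (Add1 a Zero1) a"
| ng1: "ident1 E1 E2 (Add1 a (Neg1 a)) Zero1"
| sd1: "ident1 E1 E2 (Smul1 c (Add1 a b)) (Add1 (Smul1 c a) (Smul1 c b))"
| sa1: "ident1 E1 E2 (Smul1 (c + d) a) (Add1 (Smul1 c a) (Smul1 d a))"
| sm1: "ident1 E1 E2 (Smul1 (c * d) a) (Smul1 c (Smul1 d a))"
| so1: "ident1 E1 E2 (Smul1 1 a) a"
| bl1: "ident1 E1 E2 (Br (Add1 a b) c) (Add1 (Br a c) (Br b c))"
| bl2: "ident1 E1 E2 (Br a (Add1 b c)) (Add1 (Br a b) (Br a c))"
| bl3: "ident1 E1 E2 (Br (Smul1 d a) b) (Smul1 d (Br a b))"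
| bl4: "ident1 E1 E2 (Br a (Smul1 d b)) (Smul1 d (Br a b))"
| alt: "ident1 E1 E2 (Br a a) Zero1"
| jac: "ident1 E1 E2 (Add1 (Add1 (Br a (Br b c)) (Br b (Br c a))) (Br c (Br a b))) Zero1"
| as2: "ident2 E1 E2 (Add2 (Add2 u v) w) (Add2 u (Add2 v w))"
| co2: "ident2 E1 E2 (Add2 u v) (Add2 v u)"
| ze2: "ident2 E1 E2 (Add2 u Zero2) u"
| ng2: "ident2 E1 E2 (Add2 u (Neg2 u)) Zero2"
| sd2: "ident2 E1 E2 (Smul2 c (Add2 u v)) (Add2 (Smul2 c u) (Smul2 c v))"
| sa2: "ident2 E1 E2 (Smul2 (c + d) u) (Add2 (Smul2 c u) (Smul2 d u))"
| sm2: "ident2 E1 E2 (Smul2 (c * d) u) (Smul2 c (Smul2 d u))"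
| so2: "ident2 E1 E2 (Smul2 1 u) u"
| al1: "ident2 E1 E2 (Act (Add1 a b) u) (Add2 (Act a u) (Act b u))"
| al2: "ident2 E1 E2 (Act a (Add2 u v)) (Add2 (Act a u) (Act a v))"
| al3: "ident2 E1 E2 (Act (Smul1 d a) u) (Smul2 d (Act a u))"
| al4: "ident2 E1 E2 (Act a (Smul2 d u)) (Smul2 d (Act a u))"
| rep: "ident2 E1 E2 (Act (Br a b) u) (Add2 (Act a (Act b u)) (Neg2 (Act b (Act a u))))"

definition nondegenerate :: "('k::field tm1 \<times> 'k tm1) set \<Rightarrow> ('k tm2 \<times> 'k tm2) set \<Rightarrow> bool" where
  "nondegenerate E1 E2 \<longleftrightarrow>
     \<not> ident1 E1 E2 (V1 0) (V1 1) \<and> \<not> ident2 E1 E2 (V2 0) (V2 1)"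

record ('k, 'a, 'b) rep_alg =
  car1 :: "'a set"
  car2 :: "'b set"
  zero1 :: 'a
  add1 :: "'a \<Rightarrow> 'a \<Rightarrow> 'a"
  neg1 :: "'a \<Rightarrow> 'a"
  smul1 :: "'k \<Rightarrow> 'a \<Rightarrow> 'a"
  brk :: "'a \<Rightarrow> 'a \<Rightarrow> 'a"
  zero2 :: 'b
  add2 :: "'b \<Rightarrow> 'b \<Rightarrow> 'b"
  neg2 :: "'b \<Rightarrow> 'b"
  smul2 :: "'k \<Rightarrow> 'b \<Rightarrow> 'b"
  act :: "'a \<Rightarrow> 'b \<Rightarrow> 'b"

definition rep_iso :: "('k, 'a, 'b) rep_alg \<Rightarrow> ('k, 'c, 'd) rep_alg \<Rightarrow> bool" where
  "rep_iso A B \<longleftrightarrow> (\<exists>h1 h2.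
     bij_betw h1 (car1 A) (car1 B) \<and> bij_betw h2 (car2 A) (car2 B) \<and>
     h1 (zero1 A) = zero1 B \<and> h2 (zero2 A) = zero2 B \<and>
     (\<forall>x\<in>car1 A. \<forall>y\<in>car1 A. h1 (add1 A x y) = add1 B (h1 x) (h1 y)) \<and>
     (\<forall>x\<in>car1 A. h1 (neg1 A x) = neg1 B (h1 x)) \<and>
     (\<forall>c. \<forall>x\<in>car1 A. h1 (smul1 A c x) = smul1 B c (h1 x)) \<and>
     (\<forall>x\<in>car1 A. \<forall>y\<in>car1 A. h1 (brk A x y) = brk B (h1 x) (h1 y)) \<and>
     (\<forall>u\<in>car2 A. \<forall>v\<in>car2 A. h2 (add2 A u v) = add2 B (h2 u) (h2 v)) \<and>
     (\<forall>u\<in>car2 A. h2 (neg2 A u) = neg2 B (h2 u)) \<and>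
     (\<forall>c. \<forall>u\<in>car2 A. h2 (smul2 A c u) = smul2 B c (h2 u)) \<and>
     (\<forall>x\<in>car1 A. \<forall>u\<in>car2 A. h2 (act A x u) = act B (h1 x) (h2 u)))"

text \<open>The free algebra of the variety on a free generating set with m generators of sort 1
  (x^(1)_0..x^(1)_(m-1)) and n generators of sort 2 (x^(2)_0..x^(2)_(n-1)):
  terms in these variables modulo the identities of the variety.\<close>
definition cls1 where "cls1 E1 E2 t = {s. ident1 E1 E2 s t}"
definition cls2 where "cls2 E1 E2 t = {s. ident2 E1 E2 s t}"

definition free_alg :: "('k::field tm1 \<times> 'k tm1) set \<Rightarrow> ('k tm2 \<times> 'k tm2) set \<Rightarrow> nat \<Rightarrow> nat
    \<Rightarrow> ('k, 'k tm1 set, 'k tm2 set) rep_alg" where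
  "free_alg E1 E2 m n =
    \<lparr> car1 = {cls1 E1 E2 t | t. vars1 t \<subseteq> {..<m}},
      car2 = {cls2 E1 E2 t | t. vars21 t \<subseteq> {..<m} \<and> vars22 t \<subseteq> {..<n}},
      zero1 = cls1 E1 E2 Zero1,
      add1 = (\<lambda>X Y. cls1 E1 E2 (Add1 (SOME x. x \<in> X) (SOME y. y \<in> Y))),
      neg1 = (\<lambda>X. cls1 E1 E2 (Neg1 (SOME x. x \<in> X))),
      smul1 = (\<lambda>c X. cls1 E1 E2 (Smul1 c (SOME x. x \<in> X))),
      brk = (\<lambda>X Y. cls1 E1 E2 (Br (SOME x. x \<in> X) (SOME y. y \<in> Y))),
      zero2 = cls2 E1 E2 Zero2,
      add2 = (\<lambda>U W. cls2 E1 E2 (Add2 (SOME u. u \<in> U) (SOME w. w \<in> W))),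
      neg2 = (\<lambda>U. cls2 E1 E2 (Neg2 (SOME u. u \<in> U))),
      smul2 = (\<lambda>c U. cls2 E1 E2 (Smul2 c (SOME u. u \<in> U))),
      act = (\<lambda>X U. cls2 E1 E2 (Act (SOME x. x \<in> X) (SOME u. u \<in> U))) \<rparr>"

definition IBN_variety :: "('k::field tm1 \<times> 'k tm1) set \<Rightarrow> ('k tm2 \<times> 'k tm2) set \<Rightarrow> bool" where
  "IBN_variety E1 E2 \<longleftrightarrow>
     (\<forall>m n m' n'. rep_iso (free_alg E1 E2 m n) (free_alg E1 E2 m' n') \<longrightarrow> m = m' \<and> n = n')"

end

theory Submission
  imports Defs "Jordan_Normal_Form.Determinant"
begin

text \<open>Nondegeneracy forces every defining identity to have equal linear parts: if the
  coefficients of some variable differed, substituting an arbitrary element for that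
  variable and 0 for all others would yield \<open>c y = d y\<close> with \<open>c \<noteq> d\<close>, hence \<open>y = 0\<close> for all
  \<open>y\<close> of that sort.  So taking linear parts (brackets and actions go to 0) is well defined on
  the free algebra \<open>F(m, n)\<close> and maps it onto \<open>k\<^sup>m \<oplus> k\<^sup>n\<close>.  A surjective homomorphism
  \<open>F(m, n) \<rightarrow> F(m', n')\<close> then induces, in each sort, a linear map \<open>k\<^sup>m \<rightarrow> k\<^sup>m'\<close> having a
  right inverse, so \<open>m' \<le> m\<close> and \<open>n' \<le> n\<close>; an isomorphism gives both inequalities.\<close>

text \<open>Padding \<open>C\<close> and \<open>M\<close> with zeros to square \<open>p \<times> p\<close> matrices gives \<open>C' M' = 1\<close>, but \<open>M'\<close> has a
  zero row when \<open>q < p\<close>, so \<open>det M' = 0\<close>.\<close>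

lemma identity_factorization_dim_le:
  fixes C M :: "nat \<Rightarrow> nat \<Rightarrow> 'k::field"
  assumes CM: "\<And>i j. i < p \<Longrightarrow> j < p \<Longrightarrow> (\<Sum>l<q. C i l * M l j) = of_bool (i = j)"
  shows "p \<le> q"
proof (rule ccontr)
  assume "\<not> p \<le> q"
  then have "q < p" by simp
  define C' where "C' = mat p p (\<lambda>(i, l). if l < q then C i l else (0::'k))"
  define M' where "M' = mat p p (\<lambda>(l, j). if l < q then M l j else (0::'k))"
  have "C' * M' = 1\<^sub>m p"
  proof (rule eq_matI)
    fix i j assume ij: "i < dim_row (1\<^sub>m p)" "j < dim_col (1\<^sub>m p)"
    have "(C' * M') $$ (i, j) = (\<Sum>l<p. C' $$ (i, l) * M' $$ (l, j))"
      using ij by (simp add: C'_def M'_def scalar_prod_def lessThan_atLeast0 times_mat_def)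
    also have "\<dots> = (\<Sum>l<p. if l < q then C i l * M l j else 0)"
      using ij by (intro sum.cong) (auto simp: C'_def M'_def)
    also have "\<dots> = (\<Sum>l\<in>{..<p} \<inter> {l. l < q}. C i l * M l j)"
      by (simp add: sum.inter_restrict)
    also have "{..<p} \<inter> {l. l < q} = {..<q}" using \<open>q < p\<close> by auto
    finally show "(C' * M') $$ (i, j) = 1\<^sub>m p $$ (i, j)" using ij CM by simp
  qed (auto simp: C'_def M'_def)
  moreover have "det M' = 0"
  proof -
    have "(\<Prod>i\<in>{0..<p}. M' $$ (i, f i)) = 0" if "f permutes {0..<p}" for f
      by (rule prod_zero[OF _ bexI[of _ q]]) (use \<open>q < p\<close> that in \<open>auto simp: M'_def\<close>)
    then show ?thesis unfolding det_def M'_def by (auto intro!: sum.neutral)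
  qed
  moreover have "det (C' * M') = det C' * det M'"
    by (rule det_mult) (auto simp: C'_def M'_def)
  ultimately show False by simp
qed

locale vs_congruence =
  fixes R :: "'v \<Rightarrow> 'v \<Rightarrow> bool"
    and zero :: 'v and add :: "'v \<Rightarrow> 'v \<Rightarrow> 'v" and neg :: "'v \<Rightarrow> 'v"
    and smul :: "'k::field \<Rightarrow> 'v \<Rightarrow> 'v"
  assumes cong_refl: "R a a"
    and cong_sym: "R a b \<Longrightarrow> R b a"
    and cong_trans [trans]: "R a b \<Longrightarrow> R b w \<Longrightarrow> R a w"
    and add_cong: "R a a' \<Longrightarrow> R b b' \<Longrightarrow> R (add a b) (add a' b')"
    and neg_cong: "R a a' \<Longrightarrow> R (neg a) (neg a')"
    and smul_cong: "R a a' \<Longrightarrow> R (smul c a) (smul c a')"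
    and add_assoc: "R (add (add a b) w) (add a (add b w))"
    and add_commute: "R (add a b) (add b a)"
    and add_zero: "R (add a zero) a"
    and add_neg: "R (add a (neg a)) zero"
    and smul_add: "R (smul c (add a b)) (add (smul c a) (smul c b))"
    and add_smul: "R (smul (c + d) a) (add (smul c a) (smul d a))"
    and mult_smul: "R (smul (c * d) a) (smul c (smul d a))"
    and one_smul: "R (smul 1 a) a"
begin

lemma zero_smul: "R (smul 0 a) zero"
proof -
  let ?z = "smul 0 a"
  have double: "R ?z (add ?z ?z)" using add_smul[of 0 0 a] by simp
  have "R zero (add ?z (neg ?z))" by (rule cong_sym, rule add_neg)
  also have "R \<dots> (add (add ?z ?z) (neg ?z))" by (rule add_cong[OF double cong_refl])
  also have "R \<dots> (add ?z (add ?z (neg ?z)))" by (rule add_assoc)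
  also have "R \<dots> (add ?z zero)" by (rule add_cong[OF cong_refl add_neg])
  also have "R \<dots> ?z" by (rule add_zero)
  finally show ?thesis by (rule cong_sym)
qed

lemma smul_zero: "R (smul c zero) zero"
proof -
  have "R (smul c zero) (smul c (smul 0 zero))" by (rule smul_cong, rule cong_sym, rule zero_smul)
  also have "R \<dots> (smul (c * 0) zero)" by (rule cong_sym, rule mult_smul)
  also have "R \<dots> zero" using zero_smul by simp
  finally show ?thesis .
qed

lemma add_smul_neg: "R (add (smul c a) (smul (- c) a)) zero"
proof -
  have "R (add (smul c a) (smul (- c) a)) (smul (c + - c) a)" by (rule cong_sym, rule add_smul)
  also have "R \<dots> zero" using zero_smul by simp
  finally show ?thesis .
qed

lemma neg_smul: "R (neg (smul c a)) (smul (- c) a)"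
proof -
  let ?y = "smul c a" and ?w = "smul (- c) a"
  have "R (neg ?y) (add (neg ?y) zero)" by (rule cong_sym, rule add_zero)
  also have "R \<dots> (add (neg ?y) (add ?y ?w))" by (rule add_cong[OF cong_refl cong_sym[OF add_smul_neg]])
  also have "R \<dots> (add (add (neg ?y) ?y) ?w)" by (rule cong_sym, rule add_assoc)
  also have "R \<dots> (add (add ?y (neg ?y)) ?w)" by (rule add_cong[OF add_commute cong_refl])
  also have "R \<dots> (add zero ?w)" by (rule add_cong[OF add_neg cong_refl])
  also have "R \<dots> (add ?w zero)" by (rule add_commute)
  also have "R \<dots> ?w" by (rule add_zero)
  finally show ?thesis .
qed

lemma smul_cancel:
  assumes eq: "R (smul c y) (smul d y)" and "c \<noteq> d"
  shows "R y zero"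
proof -
  have "R (smul (c - d) y) (add (smul c y) (smul (- d) y))"
    using add_smul[of c "- d" y] by simp
  also have "R \<dots> (add (smul d y) (smul (- d) y))" by (rule add_cong[OF eq cong_refl])
  also have "R \<dots> zero" by (rule add_smul_neg)
  finally have diff: "R (smul (c - d) y) zero" .
  have "R y (smul (inverse (c - d) * (c - d)) y)" using \<open>c \<noteq> d\<close> by (simp add: cong_sym[OF one_smul])
  also have "R \<dots> (smul (inverse (c - d)) (smul (c - d) y))" by (rule mult_smul)
  also have "R \<dots> (smul (inverse (c - d)) zero)" by (rule smul_cong[OF diff])
  also have "R \<dots> zero" by (rule smul_zero)
  finally show ?thesis .
qed

end

interpretation sort1: vs_congruence "ident1 E1 E2" Zero1 Add1 Neg1 Smul1 for E1 E2
  by unfold_locales (fact ident1_ident2.intros)+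

interpretation sort2: vs_congruence "ident2 E1 E2" Zero2 Add2 Neg2 Smul2 for E1 E2
  by unfold_locales (fact ident1_ident2.intros)+

text \<open>The linear part of a term is its image in the free abelian representation, in which
  brackets and actions vanish.\<close>

primrec coeff1 :: "'k::field tm1 \<Rightarrow> nat \<Rightarrow> 'k" where
  "coeff1 (V1 i) = (\<lambda>j. of_bool (i = j))"
| "coeff1 Zero1 = (\<lambda>j. 0)"
| "coeff1 (Add1 a b) = (\<lambda>j. coeff1 a j + coeff1 b j)"
| "coeff1 (Neg1 a) = (\<lambda>j. - coeff1 a j)"
| "coeff1 (Smul1 c a) = (\<lambda>j. c * coeff1 a j)"
| "coeff1 (Br a b) = (\<lambda>j. 0)"

primrec coeff2 :: "'k::field tm2 \<Rightarrow> nat \<Rightarrow> 'k" where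
  "coeff2 (V2 i) = (\<lambda>j. of_bool (i = j))"
| "coeff2 Zero2 = (\<lambda>j. 0)"
| "coeff2 (Add2 u v) = (\<lambda>j. coeff2 u j + coeff2 v j)"
| "coeff2 (Neg2 u) = (\<lambda>j. - coeff2 u j)"
| "coeff2 (Smul2 c u) = (\<lambda>j. c * coeff2 u j)"
| "coeff2 (Act a u) = (\<lambda>j. 0)"

lemma finite_vars1 [simp]: "finite (vars1 t)"
  by (induction t) auto

lemma finite_vars22 [simp]: "finite (vars22 t)"
  by (induction t) auto

lemma coeff1_sub1:
  "finite S \<Longrightarrow> vars1 s \<subseteq> S \<Longrightarrow> coeff1 (sub1 \<sigma> s) j = (\<Sum>i\<in>S. coeff1 s i * coeff1 (\<sigma> i) j)"
  by (induction s) (auto simp: sum.distrib distrib_right sum_negf sum_distrib_left mult.assoc)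

lemma coeff2_sub2:
  "finite S \<Longrightarrow> vars22 u \<subseteq> S \<Longrightarrow> coeff2 (sub2 \<sigma> \<tau> u) j = (\<Sum>i\<in>S. coeff2 u i * coeff2 (\<tau> i) j)"
  by (induction u) (auto simp: sum.distrib distrib_right sum_negf sum_distrib_left mult.assoc)

lemma coeff1_sub1_eq:
  assumes "coeff1 s = coeff1 t"
  shows "coeff1 (sub1 \<sigma> s) = coeff1 (sub1 \<sigma> t)"
proof
  fix j
  let ?S = "vars1 s \<union> vars1 t"
  show "coeff1 (sub1 \<sigma> s) j = coeff1 (sub1 \<sigma> t) j"
    using coeff1_sub1[of ?S s \<sigma> j] coeff1_sub1[of ?S t \<sigma> j] assms by simp
qed

lemma coeff2_sub2_eq:
  assumes "coeff2 u = coeff2 v"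
  shows "coeff2 (sub2 \<sigma> \<tau> u) = coeff2 (sub2 \<sigma> \<tau> v)"
proof
  fix j
  let ?S = "vars22 u \<union> vars22 v"
  show "coeff2 (sub2 \<sigma> \<tau> u) j = coeff2 (sub2 \<sigma> \<tau> v) j"
    using coeff2_sub2[of ?S u \<sigma> \<tau> j] coeff2_sub2[of ?S v \<sigma> \<tau> j] assms by simp
qed

section \<open>Linear parts are invariants of nondegenerate varieties\<close>

context
  fixes E1 :: "('k::field tm1 \<times> 'k tm1) set" and E2 :: "('k tm2 \<times> 'k tm2) set"
begin

lemma ident1_sub1_single:
  "ident1 E1 E2 (sub1 (\<lambda>i. if i = j then y else Zero1) a) (Smul1 (coeff1 a j) y)"
proof (induction a)
  case (V1 i)
  show ?case
    by (cases "i = j") (simp_all add: sort1.cong_sym[OF sort1.one_smul] sort1.cong_sym[OF sort1.zero_smul])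
next
  case Zero1
  show ?case by (simp add: sort1.cong_sym[OF sort1.zero_smul])
next
  case (Add1 a b)
  then have "ident1 E1 E2 (sub1 (\<lambda>i. if i = j then y else Zero1) (Add1 a b))
      (Add1 (Smul1 (coeff1 a j) y) (Smul1 (coeff1 b j) y))" by (simp add: cAdd1)
  also have "ident1 E1 E2 \<dots> (Smul1 (coeff1 (Add1 a b) j) y)"
    by (simp add: sort1.cong_sym[OF sort1.add_smul])
  finally show ?case .
next
  case (Neg1 a)
  then have "ident1 E1 E2 (sub1 (\<lambda>i. if i = j then y else Zero1) (Neg1 a))
      (Neg1 (Smul1 (coeff1 a j) y))" by (simp add: cNeg1)
  also have "ident1 E1 E2 \<dots> (Smul1 (coeff1 (Neg1 a) j) y)" by (simp add: sort1.neg_smul)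
  finally show ?case .
next
  case (Smul1 c a)
  then have "ident1 E1 E2 (sub1 (\<lambda>i. if i = j then y else Zero1) (Smul1 c a))
      (Smul1 c (Smul1 (coeff1 a j) y))" by (simp add: cSmul1)
  also have "ident1 E1 E2 \<dots> (Smul1 (coeff1 (Smul1 c a) j) y)"
    by (simp add: sort1.cong_sym[OF sort1.mult_smul])
  finally show ?case .
next
  case (Br a b)
  let ?c = "coeff1 a j" and ?d = "coeff1 b j"
  from Br have "ident1 E1 E2 (sub1 (\<lambda>i. if i = j then y else Zero1) (Br a b))
      (Br (Smul1 ?c y) (Smul1 ?d y))" by (simp add: cBr)
  also have "ident1 E1 E2 \<dots> (Smul1 ?c (Br y (Smul1 ?d y)))" by (rule bl3)
  also have "ident1 E1 E2 \<dots> (Smul1 ?c (Smul1 ?d (Br y y)))" by (rule cSmul1, rule bl4)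
  also have "ident1 E1 E2 \<dots> (Smul1 ?c (Smul1 ?d Zero1))" by (rule cSmul1, rule cSmul1, rule alt)
  also have "ident1 E1 E2 \<dots> (Smul1 ?c Zero1)" by (rule cSmul1, rule sort1.smul_zero)
  also have "ident1 E1 E2 \<dots> Zero1" by (rule sort1.smul_zero)
  also have "ident1 E1 E2 \<dots> (Smul1 (coeff1 (Br a b) j) y)" by (simp add: sort1.cong_sym[OF sort1.zero_smul])
  finally show ?case .
qed

lemma ident1_sub1_zero: "ident1 E1 E2 (sub1 (\<lambda>i. Zero1) a) Zero1"
proof -
  have "ident1 E1 E2 (sub1 (\<lambda>i. if i = 0 then Zero1 else Zero1) a) (Smul1 (coeff1 a 0) Zero1)"
    by (rule ident1_sub1_single)
  also have "ident1 E1 E2 \<dots> Zero1" by (rule sort1.smul_zero)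
  finally show ?thesis by simp
qed

lemma ident2_Act_zero:
  assumes "ident1 E1 E2 a Zero1"
  shows "ident2 E1 E2 (Act a u) Zero2"
proof -
  have "ident1 E1 E2 a (Smul1 0 Zero1)" using assms sort1.cong_sym[OF sort1.zero_smul] by (rule trans1)
  then have "ident2 E1 E2 (Act a u) (Act (Smul1 0 Zero1) u)" using refl2 by (rule cAct)
  also have "ident2 E1 E2 \<dots> (Smul2 0 (Act Zero1 u))" by (rule al3)
  also have "ident2 E1 E2 \<dots> Zero2" by (rule sort2.zero_smul)
  finally show ?thesis .
qed

lemma ident2_sub2_single:
  "ident2 E1 E2 (sub2 (\<lambda>i. Zero1) (\<lambda>i. if i = j then y else Zero2) u) (Smul2 (coeff2 u j) y)"
proof (induction u)
  case (V2 i)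
  show ?case
    by (cases "i = j") (simp_all add: sort2.cong_sym[OF sort2.one_smul] sort2.cong_sym[OF sort2.zero_smul])
next
  case Zero2
  show ?case by (simp add: sort2.cong_sym[OF sort2.zero_smul])
next
  case (Add2 u v)
  then have "ident2 E1 E2 (sub2 (\<lambda>i. Zero1) (\<lambda>i. if i = j then y else Zero2) (Add2 u v))
      (Add2 (Smul2 (coeff2 u j) y) (Smul2 (coeff2 v j) y))" by (simp add: cAdd2)
  also have "ident2 E1 E2 \<dots> (Smul2 (coeff2 (Add2 u v) j) y)"
    by (simp add: sort2.cong_sym[OF sort2.add_smul])
  finally show ?case .
next
  case (Neg2 u)
  then have "ident2 E1 E2 (sub2 (\<lambda>i. Zero1) (\<lambda>i. if i = j then y else Zero2) (Neg2 u))
      (Neg2 (Smul2 (coeff2 u j) y))" by (simp add: cNeg2)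
  also have "ident2 E1 E2 \<dots> (Smul2 (coeff2 (Neg2 u) j) y)" by (simp add: sort2.neg_smul)
  finally show ?case .
next
  case (Smul2 c u)
  then have "ident2 E1 E2 (sub2 (\<lambda>i. Zero1) (\<lambda>i. if i = j then y else Zero2) (Smul2 c u))
      (Smul2 c (Smul2 (coeff2 u j) y))" by (simp add: cSmul2)
  also have "ident2 E1 E2 \<dots> (Smul2 (coeff2 (Smul2 c u) j) y)"
    by (simp add: sort2.cong_sym[OF sort2.mult_smul])
  finally show ?case .
next
  case (Act a u)
  have "ident2 E1 E2 (sub2 (\<lambda>i. Zero1) (\<lambda>i. if i = j then y else Zero2) (Act a u)) Zero2"
    by (simp add: ident2_Act_zero ident1_sub1_zero)
  also have "ident2 E1 E2 \<dots> (Smul2 (coeff2 (Act a u) j) y)" by (simp add: sort2.cong_sym[OF sort2.zero_smul])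
  finally show ?case .
qed

context
  assumes nd: "nondegenerate E1 E2"
begin

lemma coeff1_E1_eq: "(s, t) \<in> E1 \<Longrightarrow> coeff1 s = coeff1 t"
proof (rule ccontr)
  assume "(s, t) \<in> E1" and "coeff1 s \<noteq> coeff1 t"
  then obtain j where j: "coeff1 s j \<noteq> coeff1 t j" by auto
  have collapse: "ident1 E1 E2 y Zero1" for y
  proof (rule sort1.smul_cancel[OF _ j])
    have "ident1 E1 E2 (Smul1 (coeff1 s j) y) (sub1 (\<lambda>i. if i = j then y else Zero1) s)"
      by (rule sym1, rule ident1_sub1_single)
    also have "ident1 E1 E2 \<dots> (sub1 (\<lambda>i. if i = j then y else Zero1) t)" by (rule hyp1) fact
    also have "ident1 E1 E2 \<dots> (Smul1 (coeff1 t j) y)" by (rule ident1_sub1_single)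
    finally show "ident1 E1 E2 (Smul1 (coeff1 s j) y) (Smul1 (coeff1 t j) y)" .
  qed
  have "ident1 E1 E2 (V1 0) (V1 1)" by (rule trans1[OF collapse sym1[OF collapse]])
  with nd show False unfolding nondegenerate_def by simp
qed

lemma coeff2_E2_eq: "(u, v) \<in> E2 \<Longrightarrow> coeff2 u = coeff2 v"
proof (rule ccontr)
  assume "(u, v) \<in> E2" and "coeff2 u \<noteq> coeff2 v"
  then obtain j where j: "coeff2 u j \<noteq> coeff2 v j" by auto
  let ?\<tau> = "\<lambda>y i. if i = j then y else Zero2"
  have collapse: "ident2 E1 E2 y Zero2" for y
  proof (rule sort2.smul_cancel[OF _ j])
    have "ident2 E1 E2 (Smul2 (coeff2 u j) y) (sub2 (\<lambda>i. Zero1) (?\<tau> y) u)"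
      by (rule sym2, rule ident2_sub2_single)
    also have "ident2 E1 E2 \<dots> (sub2 (\<lambda>i. Zero1) (?\<tau> y) v)" by (rule hyp2) fact
    also have "ident2 E1 E2 \<dots> (Smul2 (coeff2 v j) y)" by (rule ident2_sub2_single)
    finally show "ident2 E1 E2 (Smul2 (coeff2 u j) y) (Smul2 (coeff2 v j) y)" .
  qed
  have "ident2 E1 E2 (V2 0) (V2 1)" by (rule trans2[OF collapse sym2[OF collapse]])
  with nd show False unfolding nondegenerate_def by simp
qed

lemma coeff_ident_eq:
  shows coeff1_ident_eq: "ident1 E1 E2 a b \<Longrightarrow> coeff1 a = coeff1 b"
    and coeff2_ident_eq: "ident2 E1 E2 u v \<Longrightarrow> coeff2 u = coeff2 v"
  by (induction rule: ident1_ident2.inducts)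
     (auto simp: algebra_simps coeff1_E1_eq coeff2_E2_eq intro: coeff1_sub1_eq coeff2_sub2_eq)

end

end

definition rep_hom :: "('k, 'a, 'b) rep_alg \<Rightarrow> ('k, 'c, 'd) rep_alg \<Rightarrow> ('a \<Rightarrow> 'c) \<Rightarrow> ('b \<Rightarrow> 'd) \<Rightarrow> bool" where
  "rep_hom A B h1 h2 \<longleftrightarrow>
     h1 (zero1 A) = zero1 B \<and> h2 (zero2 A) = zero2 B \<and>
     (\<forall>x\<in>car1 A. \<forall>y\<in>car1 A. h1 (add1 A x y) = add1 B (h1 x) (h1 y)) \<and>
     (\<forall>x\<in>car1 A. h1 (neg1 A x) = neg1 B (h1 x)) \<and>
     (\<forall>c. \<forall>x\<in>car1 A. h1 (smul1 A c x) = smul1 B c (h1 x)) \<and>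
     (\<forall>x\<in>car1 A. \<forall>y\<in>car1 A. h1 (brk A x y) = brk B (h1 x) (h1 y)) \<and>
     (\<forall>u\<in>car2 A. \<forall>v\<in>car2 A. h2 (add2 A u v) = add2 B (h2 u) (h2 v)) \<and>
     (\<forall>u\<in>car2 A. h2 (neg2 A u) = neg2 B (h2 u)) \<and>
     (\<forall>c. \<forall>u\<in>car2 A. h2 (smul2 A c u) = smul2 B c (h2 u)) \<and>
     (\<forall>x\<in>car1 A. \<forall>u\<in>car2 A. h2 (act A x u) = act B (h1 x) (h2 u))"

lemma rep_homD:
  assumes "rep_hom A B h1 h2"
  shows "h1 (zero1 A) = zero1 B" "h2 (zero2 A) = zero2 B"
    "x \<in> car1 A \<Longrightarrow> y \<in> car1 A \<Longrightarrow> h1 (add1 A x y) = add1 B (h1 x) (h1 y)"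
    "x \<in> car1 A \<Longrightarrow> h1 (neg1 A x) = neg1 B (h1 x)"
    "x \<in> car1 A \<Longrightarrow> h1 (smul1 A c x) = smul1 B c (h1 x)"
    "x \<in> car1 A \<Longrightarrow> y \<in> car1 A \<Longrightarrow> h1 (brk A x y) = brk B (h1 x) (h1 y)"
    "u \<in> car2 A \<Longrightarrow> v \<in> car2 A \<Longrightarrow> h2 (add2 A u v) = add2 B (h2 u) (h2 v)"
    "u \<in> car2 A \<Longrightarrow> h2 (neg2 A u) = neg2 B (h2 u)"
    "u \<in> car2 A \<Longrightarrow> h2 (smul2 A c u) = smul2 B c (h2 u)"
    "x \<in> car1 A \<Longrightarrow> u \<in> car2 A \<Longrightarrow> h2 (act A x u) = act B (h1 x) (h2 u)"
  using assms unfolding rep_hom_def by blast+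

lemma rep_iso_iff_bij_hom:
  "rep_iso A B \<longleftrightarrow>
    (\<exists>h1 h2. bij_betw h1 (car1 A) (car1 B) \<and> bij_betw h2 (car2 A) (car2 B) \<and> rep_hom A B h1 h2)"
  unfolding rep_iso_def rep_hom_def by simp

definition rep_closed :: "('k, 'a, 'b) rep_alg \<Rightarrow> bool" where
  "rep_closed A \<longleftrightarrow>
     zero1 A \<in> car1 A \<and> zero2 A \<in> car2 A \<and>
     (\<forall>x\<in>car1 A. \<forall>y\<in>car1 A. add1 A x y \<in> car1 A \<and> brk A x y \<in> car1 A) \<and>
     (\<forall>x\<in>car1 A. neg1 A x \<in> car1 A \<and> (\<forall>c. smul1 A c x \<in> car1 A)) \<and>
     (\<forall>u\<in>car2 A. \<forall>v\<in>car2 A. add2 A u v \<in> car2 A) \<and>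
     (\<forall>u\<in>car2 A. neg2 A u \<in> car2 A \<and> (\<forall>c. smul2 A c u \<in> car2 A)) \<and>
     (\<forall>x\<in>car1 A. \<forall>u\<in>car2 A. act A x u \<in> car2 A)"

lemma rep_closedD:
  assumes "rep_closed A"
  shows "zero1 A \<in> car1 A" "zero2 A \<in> car2 A"
    "x \<in> car1 A \<Longrightarrow> y \<in> car1 A \<Longrightarrow> add1 A x y \<in> car1 A"
    "x \<in> car1 A \<Longrightarrow> neg1 A x \<in> car1 A"
    "x \<in> car1 A \<Longrightarrow> smul1 A c x \<in> car1 A"
    "x \<in> car1 A \<Longrightarrow> y \<in> car1 A \<Longrightarrow> brk A x y \<in> car1 A"
    "u \<in> car2 A \<Longrightarrow> v \<in> car2 A \<Longrightarrow> add2 A u v \<in> car2 A"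
    "u \<in> car2 A \<Longrightarrow> neg2 A u \<in> car2 A"
    "u \<in> car2 A \<Longrightarrow> smul2 A c u \<in> car2 A"
    "x \<in> car1 A \<Longrightarrow> u \<in> car2 A \<Longrightarrow> act A x u \<in> car2 A"
  using assms unfolding rep_closed_def by blast+

lemma inv_into_op1:
  assumes h: "bij_betw h A B"
    and closed: "\<And>x. x \<in> A \<Longrightarrow> f x \<in> A" and hom: "\<And>x. x \<in> A \<Longrightarrow> h (f x) = f' (h x)"
    and y: "y \<in> B"
  shows "inv_into A h (f' y) = f (inv_into A h y)"
proof -
  have x: "inv_into A h y \<in> A" "h (inv_into A h y) = y"
    using h y by (auto simp: bij_betw_def inv_into_into f_inv_into_f)
  then have "f' y = h (f (inv_into A h y))" by (simp add: hom)
  then show ?thesis using h closed x(1) by (simp add: bij_betw_inv_into_left)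
qed

lemma inv_into_op2:
  assumes h: "bij_betw h A B" and k: "bij_betw k C D"
    and closed: "\<And>x u. x \<in> A \<Longrightarrow> u \<in> C \<Longrightarrow> f x u \<in> C"
    and hom: "\<And>x u. x \<in> A \<Longrightarrow> u \<in> C \<Longrightarrow> k (f x u) = f' (h x) (k u)"
    and y: "y \<in> B" and v: "v \<in> D"
  shows "inv_into C k (f' y v) = f (inv_into A h y) (inv_into C k v)"
proof -
  have x: "inv_into A h y \<in> A" "h (inv_into A h y) = y"
    using h y by (auto simp: bij_betw_def inv_into_into f_inv_into_f)
  have u: "inv_into C k v \<in> C" "k (inv_into C k v) = v"
    using k v by (auto simp: bij_betw_def inv_into_into f_inv_into_f)
  from x u have "f' y v = k (f (inv_into A h y) (inv_into C k v))" by (simp add: hom)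
  then show ?thesis using k closed x(1) u(1) by (simp add: bij_betw_inv_into_left)
qed

lemma rep_hom_inv_into:
  assumes A: "rep_closed A"
    and b1: "bij_betw h1 (car1 A) (car1 B)" and b2: "bij_betw h2 (car2 A) (car2 B)"
    and H: "rep_hom A B h1 h2"
  shows "rep_hom B A (inv_into (car1 A) h1) (inv_into (car2 A) h2)"
proof -
  note closed = rep_closedD[OF A] and hom = rep_homD[OF H]
  let ?g1 = "inv_into (car1 A) h1" and ?g2 = "inv_into (car2 A) h2"
  show ?thesis
    unfolding rep_hom_def
  proof (intro conjI ballI allI)
    show "?g1 (zero1 B) = zero1 A"
      using bij_betw_inv_into_left[OF b1 closed(1)] by (simp add: hom(1))
    show "?g2 (zero2 B) = zero2 A"
      using bij_betw_inv_into_left[OF b2 closed(2)] by (simp add: hom(2))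
  next
    fix x y assume mem: "x \<in> car1 B" "y \<in> car1 B"
    show "?g1 (add1 B x y) = add1 A (?g1 x) (?g1 y)"
      by (rule inv_into_op2[OF b1 b1, where f = "add1 A"]; simp add: closed hom mem)
  next
    fix x assume mem: "x \<in> car1 B"
    show "?g1 (neg1 B x) = neg1 A (?g1 x)"
      by (rule inv_into_op1[OF b1, where f = "neg1 A"]; simp add: closed hom mem)
  next
    fix c x assume mem: "x \<in> car1 B"
    show "?g1 (smul1 B c x) = smul1 A c (?g1 x)"
      by (rule inv_into_op1[OF b1, where f = "smul1 A c"]; simp add: closed hom mem)
  next
    fix x y assume mem: "x \<in> car1 B" "y \<in> car1 B"
    show "?g1 (brk B x y) = brk A (?g1 x) (?g1 y)"
      by (rule inv_into_op2[OF b1 b1, where f = "brk A"]; simp add: closed hom mem)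
  next
    fix u v assume mem: "u \<in> car2 B" "v \<in> car2 B"
    show "?g2 (add2 B u v) = add2 A (?g2 u) (?g2 v)"
      by (rule inv_into_op2[OF b2 b2, where f = "add2 A"]; simp add: closed hom mem)
  next
    fix u assume mem: "u \<in> car2 B"
    show "?g2 (neg2 B u) = neg2 A (?g2 u)"
      by (rule inv_into_op1[OF b2, where f = "neg2 A"]; simp add: closed hom mem)
  next
    fix c u assume mem: "u \<in> car2 B"
    show "?g2 (smul2 B c u) = smul2 A c (?g2 u)"
      by (rule inv_into_op1[OF b2, where f = "smul2 A c"]; simp add: closed hom mem)
  next
    fix x u assume mem: "x \<in> car1 B" "u \<in> car2 B"
    show "?g2 (act B x u) = act A (?g1 x) (?g2 u)"
      by (rule inv_into_op2[OF b1 b2, where f = "act A"]; simp add: closed hom mem)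
  qed
qed

lemma rep_iso_sym: "rep_closed A \<Longrightarrow> rep_iso A B \<Longrightarrow> rep_iso B A"
  unfolding rep_iso_iff_bij_hom by (meson bij_betw_inv_into rep_hom_inv_into)

context
  fixes E1 :: "('k::field tm1 \<times> 'k tm1) set" and E2 :: "('k tm2 \<times> 'k tm2) set"
begin

lemma cls1_eq: "ident1 E1 E2 a b \<Longrightarrow> cls1 E1 E2 a = cls1 E1 E2 b"
  unfolding cls1_def by (blast intro: trans1 sym1)

lemma cls2_eq: "ident2 E1 E2 u v \<Longrightarrow> cls2 E1 E2 u = cls2 E1 E2 v"
  unfolding cls2_def by (blast intro: trans2 sym2)

lemma some_cls1: "ident1 E1 E2 (SOME b. b \<in> cls1 E1 E2 a) a"
  using someI[of "\<lambda>b. b \<in> cls1 E1 E2 a" a] by (simp add: cls1_def refl1)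

lemma some_cls2: "ident2 E1 E2 (SOME v. v \<in> cls2 E1 E2 u) u"
  using someI[of "\<lambda>v. v \<in> cls2 E1 E2 u" u] by (simp add: cls2_def refl2)

lemma free_alg_ops1:
  "zero1 (free_alg E1 E2 m n) = cls1 E1 E2 Zero1"
  "add1 (free_alg E1 E2 m n) (cls1 E1 E2 a) (cls1 E1 E2 b) = cls1 E1 E2 (Add1 a b)"
  "neg1 (free_alg E1 E2 m n) (cls1 E1 E2 a) = cls1 E1 E2 (Neg1 a)"
  "smul1 (free_alg E1 E2 m n) c (cls1 E1 E2 a) = cls1 E1 E2 (Smul1 c a)"
  "brk (free_alg E1 E2 m n) (cls1 E1 E2 a) (cls1 E1 E2 b) = cls1 E1 E2 (Br a b)"
  by (auto simp: free_alg_def intro!: cls1_eq cAdd1 cNeg1 cSmul1 cBr some_cls1)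

lemma free_alg_ops2:
  "zero2 (free_alg E1 E2 m n) = cls2 E1 E2 Zero2"
  "add2 (free_alg E1 E2 m n) (cls2 E1 E2 u) (cls2 E1 E2 v) = cls2 E1 E2 (Add2 u v)"
  "neg2 (free_alg E1 E2 m n) (cls2 E1 E2 u) = cls2 E1 E2 (Neg2 u)"
  "smul2 (free_alg E1 E2 m n) c (cls2 E1 E2 u) = cls2 E1 E2 (Smul2 c u)"
  "act (free_alg E1 E2 m n) (cls1 E1 E2 a) (cls2 E1 E2 u) = cls2 E1 E2 (Act a u)"
  by (auto simp: free_alg_def intro!: cls2_eq cAdd2 cNeg2 cSmul2 cAct some_cls1 some_cls2)

lemma cls1_in_free_alg: "vars1 a \<subseteq> {..<m} \<Longrightarrow> cls1 E1 E2 a \<in> car1 (free_alg E1 E2 m n)"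
  by (auto simp: free_alg_def)

lemma cls2_in_free_alg:
  "vars21 u \<subseteq> {..<m} \<Longrightarrow> vars22 u \<subseteq> {..<n} \<Longrightarrow> cls2 E1 E2 u \<in> car2 (free_alg E1 E2 m n)"
  by (auto simp: free_alg_def)

lemma car1_free_algE:
  assumes "X \<in> car1 (free_alg E1 E2 m n)"
  obtains a where "X = cls1 E1 E2 a" "vars1 a \<subseteq> {..<m}"
  using assms by (auto simp: free_alg_def)

lemma car2_free_algE:
  assumes "U \<in> car2 (free_alg E1 E2 m n)"
  obtains u where "U = cls2 E1 E2 u" "vars21 u \<subseteq> {..<m}" "vars22 u \<subseteq> {..<n}"
  using assms by (auto simp: free_alg_def)

lemma rep_closed_free_alg: "rep_closed (free_alg E1 E2 m n)"
  unfolding rep_closed_def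
  by (auto simp: free_alg_ops1 free_alg_ops2 elim!: car1_free_algE car2_free_algE
      intro!: cls1_in_free_alg cls2_in_free_alg) blast+

end

definition Coeff1 :: "'k::field tm1 set \<Rightarrow> nat \<Rightarrow> 'k" where
  "Coeff1 X = coeff1 (SOME a. a \<in> X)"

definition Coeff2 :: "'k::field tm2 set \<Rightarrow> nat \<Rightarrow> 'k" where
  "Coeff2 U = coeff2 (SOME u. u \<in> U)"

context
  fixes E1 :: "('k::field tm1 \<times> 'k tm1) set" and E2 :: "('k tm2 \<times> 'k tm2) set"
  assumes nd: "nondegenerate E1 E2"
begin

lemma Coeff1_cls1 [simp]: "Coeff1 (cls1 E1 E2 a) = coeff1 a"
  unfolding Coeff1_def using coeff1_ident_eq[OF nd some_cls1] .

lemma Coeff2_cls2 [simp]: "Coeff2 (cls2 E1 E2 u) = coeff2 u"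
  unfolding Coeff2_def using coeff2_ident_eq[OF nd some_cls2] .

lemma Coeff_free_alg_ops [simp]:
  "Coeff1 (zero1 (free_alg E1 E2 m n)) = (\<lambda>j. 0)"
  "Coeff1 (add1 (free_alg E1 E2 m n) X Y) = (\<lambda>j. Coeff1 X j + Coeff1 Y j)"
  "Coeff1 (neg1 (free_alg E1 E2 m n) X) = (\<lambda>j. - Coeff1 X j)"
  "Coeff1 (smul1 (free_alg E1 E2 m n) c X) = (\<lambda>j. c * Coeff1 X j)"
  "Coeff1 (brk (free_alg E1 E2 m n) X Y) = (\<lambda>j. 0)"
  "Coeff2 (zero2 (free_alg E1 E2 m n)) = (\<lambda>j. 0)"
  "Coeff2 (add2 (free_alg E1 E2 m n) U V) = (\<lambda>j. Coeff2 U j + Coeff2 V j)"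
  "Coeff2 (neg2 (free_alg E1 E2 m n) U) = (\<lambda>j. - Coeff2 U j)"
  "Coeff2 (smul2 (free_alg E1 E2 m n) c U) = (\<lambda>j. c * Coeff2 U j)"
  "Coeff2 (act (free_alg E1 E2 m n) X U) = (\<lambda>j. 0)"
  by (simp_all add: free_alg_def Coeff1_def[of X] Coeff1_def[of Y] Coeff2_def[of U] Coeff2_def[of V])

context
  fixes h1 h2 m n m' n'
  assumes H: "rep_hom (free_alg E1 E2 m n) (free_alg E1 E2 m' n') h1 h2"
begin

lemma rep_hom_cls1:
  "h1 (cls1 E1 E2 Zero1) = zero1 (free_alg E1 E2 m' n')"
  "vars1 a \<subseteq> {..<m} \<Longrightarrow> vars1 b \<subseteq> {..<m} \<Longrightarrow>
    h1 (cls1 E1 E2 (Add1 a b)) = add1 (free_alg E1 E2 m' n') (h1 (cls1 E1 E2 a)) (h1 (cls1 E1 E2 b))"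
  "vars1 a \<subseteq> {..<m} \<Longrightarrow>
    h1 (cls1 E1 E2 (Neg1 a)) = neg1 (free_alg E1 E2 m' n') (h1 (cls1 E1 E2 a))"
  "vars1 a \<subseteq> {..<m} \<Longrightarrow>
    h1 (cls1 E1 E2 (Smul1 c a)) = smul1 (free_alg E1 E2 m' n') c (h1 (cls1 E1 E2 a))"
  "vars1 a \<subseteq> {..<m} \<Longrightarrow> vars1 b \<subseteq> {..<m} \<Longrightarrow>
    h1 (cls1 E1 E2 (Br a b)) = brk (free_alg E1 E2 m' n') (h1 (cls1 E1 E2 a)) (h1 (cls1 E1 E2 b))"
  using rep_homD(1)[OF H] rep_homD(3,6)[OF H, where x = "cls1 E1 E2 a" and y = "cls1 E1 E2 b"]
    rep_homD(4,5)[OF H, where x = "cls1 E1 E2 a"]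
  by (simp_all add: cls1_in_free_alg free_alg_ops1)

lemma rep_hom_cls2:
  "h2 (cls2 E1 E2 Zero2) = zero2 (free_alg E1 E2 m' n')"
  "vars21 u \<subseteq> {..<m} \<Longrightarrow> vars22 u \<subseteq> {..<n} \<Longrightarrow> vars21 v \<subseteq> {..<m} \<Longrightarrow> vars22 v \<subseteq> {..<n} \<Longrightarrow>
    h2 (cls2 E1 E2 (Add2 u v)) = add2 (free_alg E1 E2 m' n') (h2 (cls2 E1 E2 u)) (h2 (cls2 E1 E2 v))"
  "vars21 u \<subseteq> {..<m} \<Longrightarrow> vars22 u \<subseteq> {..<n} \<Longrightarrow>
    h2 (cls2 E1 E2 (Neg2 u)) = neg2 (free_alg E1 E2 m' n') (h2 (cls2 E1 E2 u))"
  "vars21 u \<subseteq> {..<m} \<Longrightarrow> vars22 u \<subseteq> {..<n} \<Longrightarrow>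
    h2 (cls2 E1 E2 (Smul2 c u)) = smul2 (free_alg E1 E2 m' n') c (h2 (cls2 E1 E2 u))"
  "vars1 a \<subseteq> {..<m} \<Longrightarrow> vars21 u \<subseteq> {..<m} \<Longrightarrow> vars22 u \<subseteq> {..<n} \<Longrightarrow>
    h2 (cls2 E1 E2 (Act a u)) = act (free_alg E1 E2 m' n') (h1 (cls1 E1 E2 a)) (h2 (cls2 E1 E2 u))"
  using rep_homD(2)[OF H] rep_homD(7)[OF H, where u = "cls2 E1 E2 u" and v = "cls2 E1 E2 v"]
    rep_homD(8,9)[OF H, where u = "cls2 E1 E2 u"]
    rep_homD(10)[OF H, where x = "cls1 E1 E2 a" and u = "cls2 E1 E2 u"]
  by (simp_all add: cls1_in_free_alg cls2_in_free_alg free_alg_ops1 free_alg_ops2)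

lemma Coeff1_rep_hom:
  "vars1 a \<subseteq> {..<m} \<Longrightarrow>
    Coeff1 (h1 (cls1 E1 E2 a)) j = (\<Sum>i<m. coeff1 a i * Coeff1 (h1 (cls1 E1 E2 (V1 i))) j)"
  by (induction a)
     (simp_all add: rep_hom_cls1 sum.distrib distrib_right sum_negf sum_distrib_left mult.assoc)

lemma Coeff2_rep_hom:
  "vars21 u \<subseteq> {..<m} \<Longrightarrow> vars22 u \<subseteq> {..<n} \<Longrightarrow>
    Coeff2 (h2 (cls2 E1 E2 u)) j = (\<Sum>i<n. coeff2 u i * Coeff2 (h2 (cls2 E1 E2 (V2 i))) j)"
  by (induction u)
     (simp_all add: rep_hom_cls2 sum.distrib distrib_right sum_negf sum_distrib_left mult.assoc)

end

lemma surj_rep_hom_free_alg_le1: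
  assumes H: "rep_hom (free_alg E1 E2 m n) (free_alg E1 E2 m' n') h1 h2"
    and surj: "car1 (free_alg E1 E2 m' n') \<subseteq> h1 ` car1 (free_alg E1 E2 m n)"
  shows "m' \<le> m"
proof -
  have "\<exists>a. vars1 a \<subseteq> {..<m} \<and> h1 (cls1 E1 E2 a) = cls1 E1 E2 (V1 i)" if "i < m'" for i
  proof -
    have "cls1 E1 E2 (V1 i) \<in> car1 (free_alg E1 E2 m' n')" using that by (intro cls1_in_free_alg) auto
    with surj obtain X where "X \<in> car1 (free_alg E1 E2 m n)" "h1 X = cls1 E1 E2 (V1 i)" by blast
    then show ?thesis by (metis car1_free_algE)
  qed
  then obtain T where T: "\<And>i. i < m' \<Longrightarrow> vars1 (T i) \<subseteq> {..<m} \<and> h1 (cls1 E1 E2 (T i)) = cls1 E1 E2 (V1 i)"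
    by metis
  show ?thesis
  proof (rule identity_factorization_dim_le)
    fix i j assume "i < m'" "j < m'"
    then show "(\<Sum>l<m. coeff1 (T i) l * Coeff1 (h1 (cls1 E1 E2 (V1 l))) j) = of_bool (i = j)"
      using Coeff1_rep_hom[OF H, of "T i" j] T[of i] by simp
  qed
qed

lemma surj_rep_hom_free_alg_le2:
  assumes H: "rep_hom (free_alg E1 E2 m n) (free_alg E1 E2 m' n') h1 h2"
    and surj: "car2 (free_alg E1 E2 m' n') \<subseteq> h2 ` car2 (free_alg E1 E2 m n)"
  shows "n' \<le> n"
proof -
  have "\<exists>u. (vars21 u \<subseteq> {..<m} \<and> vars22 u \<subseteq> {..<n}) \<and> h2 (cls2 E1 E2 u) = cls2 E1 E2 (V2 i)"
    if "i < n'" for i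
  proof -
    have "cls2 E1 E2 (V2 i) \<in> car2 (free_alg E1 E2 m' n')" using that by (intro cls2_in_free_alg) auto
    with surj obtain U where "U \<in> car2 (free_alg E1 E2 m n)" "h2 U = cls2 E1 E2 (V2 i)" by blast
    then show ?thesis by (metis car2_free_algE)
  qed
  then obtain T where T: "\<And>i. i < n' \<Longrightarrow>
      (vars21 (T i) \<subseteq> {..<m} \<and> vars22 (T i) \<subseteq> {..<n}) \<and> h2 (cls2 E1 E2 (T i)) = cls2 E1 E2 (V2 i)"
    by metis
  show ?thesis
  proof (rule identity_factorization_dim_le)
    fix i j assume "i < n'" "j < n'"
    then show "(\<Sum>l<n. coeff2 (T i) l * Coeff2 (h2 (cls2 E1 E2 (V2 l))) j) = of_bool (i = j)"
      using Coeff2_rep_hom[OF H, of "T i" j] T[of i] by simp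
  qed
qed

lemma rep_iso_free_alg_le:
  assumes "rep_iso (free_alg E1 E2 m n) (free_alg E1 E2 m' n')"
  shows "m' \<le> m \<and> n' \<le> n"
proof -
  obtain h1 h2 where
    "bij_betw h1 (car1 (free_alg E1 E2 m n)) (car1 (free_alg E1 E2 m' n'))"
    "bij_betw h2 (car2 (free_alg E1 E2 m n)) (car2 (free_alg E1 E2 m' n'))"
    "rep_hom (free_alg E1 E2 m n) (free_alg E1 E2 m' n') h1 h2"
    using assms unfolding rep_iso_iff_bij_hom by blast
  then show ?thesis
    using surj_rep_hom_free_alg_le1 surj_rep_hom_free_alg_le2 by (simp add: bij_betw_def)
qed

end

theorem mainTheorem19:
  fixes E1 :: "('k::field tm1 \<times> 'k tm1) set" and E2 :: "('k tm2 \<times> 'k tm2) set"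
  assumes "nondegenerate E1 E2"
  shows "IBN_variety E1 E2"
  unfolding IBN_variety_def
proof (intro allI impI)
  fix m n m' n'
  assume iso: "rep_iso (free_alg E1 E2 m n) (free_alg E1 E2 m' n')"
  have "m' \<le> m \<and> n' \<le> n"
    by (rule rep_iso_free_alg_le[OF assms iso])
  moreover have "m \<le> m' \<and> n \<le> n'"
    by (rule rep_iso_free_alg_le[OF assms rep_iso_sym[OF rep_closed_free_alg iso]])
  ultimately show "m = m' \<and> n = n'" by simp
qed

end
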